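(* For any positive integers $r,t$ and positive real number $k'$ there exists a real number $\alpha=\alpha(r,t,k')>0$ such that the following holds. Let $\ell$ be a nonnegative integer or $\infty$, let $b$ be a positive integer, let $\epsilon'\ge0$ be real, let $G$ be a graph, $Y\subseteq V(G)$, and let $\mathcal C$ be a collection of pairwise disjoint connected subgraphs of $G-Y$, each with at most $b$ vertices, each $r$-adherent to $Y$ and each of radius at most $\ell$. Then at least one of the following holds: (1) there exists a graph $L$ with $|E(L)|>k'|V(L)|^{1+\epsilon'}$ such that $G$ contains a subgraph isomorphic to a $[2\ell+1]$-subdivision of $L$ whose branch vertices all lie in $Y$; (2) there exist $r$ distinct vertices $y_1,\dots,y_r\in Y$ and $t$ distinct members $C_1,\dots,C_t\in\mathcal C$ such that each $y_i$ has a neighbour in $V(C_j)$ for all $i\in[r]$, $j\in[t]$; (3) $|\mathcal C|\le\alpha|Y|^{1+\epsilon'(r-1)}$.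
   Context: Graphs are finite and simple. A subgraph $L$ of $G$ is $r$-adherent to $Y\subseteq V(G)$ if $V(L)\cap Y=\emptyset$ and at least $r$ vertices of $Y$ have a neighbour in $V(L)$. The radius of a connected graph is the least $k$ such that some vertex is at distance at most $k$ from every vertex. For a positive integer $m$, $[m]=\{1,\dots,m\}$, and $[\infty]$ denotes the set of all positive integers. For a set $S$ of nonnegative integers, an $S$-subdivision of a graph $L$ is obtained by subdividing each edge $e$ of $L$ exactly $s_e$ times for some $s_e\in S$; the vertices of $L$ are the branch vertices. *)

theory Defs
  imports Complex_Main "HOL-Library.Extended_Nat"
begin

type_synonym 'a graph = "'a set \<times> 'a set set"

definition graph :: "'a graph \<Rightarrow> bool" where
  "graph G \<longleftrightarrow> finite (fst G) \<and>
     (\<forall>e\<in>snd G. \<exists>u v. e = {u, v} \<and> u \<noteq> v \<and> u \<in> fst G \<and> v \<in> fst G)"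

definition subgraph :: "'a graph \<Rightarrow> 'a graph \<Rightarrow> bool" where
  "subgraph H G \<longleftrightarrow> graph H \<and> fst H \<subseteq> fst G \<and> snd H \<subseteq> snd G"

text \<open>Walks (sequences of vertices, consecutive ones adjacent) and paths (walks without
  repeated vertices). A walk given by list p has length (number of edges) length p - 1.\<close>

definition is_walk :: "'a graph \<Rightarrow> 'a list \<Rightarrow> bool" where
  "is_walk G p \<longleftrightarrow> p \<noteq> [] \<and> set p \<subseteq> fst G \<and>
     (\<forall>i. Suc i < length p \<longrightarrow> {p ! i, p ! Suc i} \<in> snd G)"

definition is_path :: "'a graph \<Rightarrow> 'a list \<Rightarrow> bool" where
  "is_path G p \<longleftrightarrow> is_walk G p \<and> distinct p"

definition connected_graph :: "'a graph \<Rightarrow> bool" where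
  "connected_graph G \<longleftrightarrow> fst G \<noteq> {} \<and>
     (\<forall>u\<in>fst G. \<forall>v\<in>fst G. \<exists>p. is_walk G p \<and> hd p = u \<and> last p = v)"

definition radius_le :: "'a graph \<Rightarrow> enat \<Rightarrow> bool" where
  "radius_le G l \<longleftrightarrow> (\<exists>c\<in>fst G. \<forall>v\<in>fst G.
     \<exists>p. is_walk G p \<and> hd p = c \<and> last p = v \<and> enat (length p - 1) \<le> l)"

definition adherent :: "'a graph \<Rightarrow> nat \<Rightarrow> 'a graph \<Rightarrow> 'a set \<Rightarrow> bool" where
  "adherent G r L Y \<longleftrightarrow> fst L \<inter> Y = {} \<and>
     r \<le> card {y\<in>Y. \<exists>v\<in>fst L. {y, v} \<in> snd G}"

text \<open>G contains a subgraph isomorphic to an S-subdivision of L whose branch vertices all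
  lie in Y: branch vertices are mapped injectively by phi into Y, each edge e = uv of L is
  realised by a path P e of G from phi u to phi v with exactly s_e \<in> S internal vertices;
  internal vertices avoid branch vertices and paths of distinct edges are internally
  disjoint.\<close>

definition has_subdivision_in ::
    "'a graph \<Rightarrow> 'b graph \<Rightarrow> nat set \<Rightarrow> 'a set \<Rightarrow> bool" where
  "has_subdivision_in G L S Y \<longleftrightarrow>
     (\<exists>(\<phi>::'b \<Rightarrow> 'a) (P::'b set \<Rightarrow> 'a list).
        inj_on \<phi> (fst L) \<and> \<phi> ` fst L \<subseteq> Y \<and>
        (\<forall>e\<in>snd L. \<exists>u v. e = {u, v} \<and> is_path G (P e) \<and> length (P e) \<ge> 2 \<and>
            hd (P e) = \<phi> u \<and> last (P e) = \<phi> v \<and> length (P e) - 2 \<in> S \<and>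
            set (butlast (tl (P e))) \<inter> \<phi> ` fst L = {}) \<and>
        (\<forall>e\<in>snd L. \<forall>e'\<in>snd L. e \<noteq> e' \<longrightarrow>
            set (butlast (tl (P e))) \<inter> set (butlast (tl (P e'))) = {}))"

end

theory Submission
  imports Defs
begin

text \<open>Choose for every member C an r-set S C of its neighbours in Y. If (2) fails, at most
  t - 1 members share the same r-set. Take a maximal set H of pairs of Y together with distinct
  members g q such that q \<subseteq> S (g q). Routing each pair through its member (of radius at most l)
  yields a [2l+1]-subdivision with branch vertices in Y, so if (1) fails every subgraph of the
  graph (Y, H) on W vertices has at most k' |W|^(1+\<epsilon>') edges. By maximality the r-set of every
  member not used by g is a clique of H, and a graph in which every induced subgraph has average
  degree at most 2 k' |Y|^\<epsilon>' has at most |Y| (2 k' |Y|^\<epsilon>')^(r-1) cliques of size r.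
  Hence |\<C>| \<le> |H| + (t - 1) |Y| (2 k' |Y|^\<epsilon>')^(r-1) \<le> \<alpha> |Y|^(1+\<epsilon>'(r-1)).\<close>

lemma is_walk_not_Nil: "is_walk G p \<Longrightarrow> p \<noteq> []"
  by (simp add: is_walk_def)

lemma is_walk_singleton [simp]: "is_walk G [x] \<longleftrightarrow> x \<in> fst G"
  by (simp add: is_walk_def)

lemma is_walk_Cons_Cons:
  "is_walk G (x # y # ys) \<longleftrightarrow> x \<in> fst G \<and> {x, y} \<in> snd G \<and> is_walk G (y # ys)"
proof
  assume walk: "is_walk G (x # y # ys)"
  then have "{x, y} \<in> snd G"
    unfolding is_walk_def by (metis Suc_less_eq length_Cons nth_Cons_0 nth_Cons_Suc zero_less_Suc)
  moreover have "is_walk G (y # ys)" using walk unfolding is_walk_def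
    by (metis (no_types, lifting) Suc_less_eq length_Cons list.distinct(1) nth_Cons_Suc order_trans
        set_subset_Cons)
  ultimately show "x \<in> fst G \<and> {x, y} \<in> snd G \<and> is_walk G (y # ys)"
    using walk by (simp add: is_walk_def)
next
  assume parts: "x \<in> fst G \<and> {x, y} \<in> snd G \<and> is_walk G (y # ys)"
  show "is_walk G (x # y # ys)" unfolding is_walk_def
  proof (intro conjI allI impI)
    show "set (x # y # ys) \<subseteq> fst G" using parts by (auto simp: is_walk_def)
    fix i assume "Suc i < length (x # y # ys)"
    then show "{(x # y # ys) ! i, (x # y # ys) ! Suc i} \<in> snd G"
      using parts by (cases i) (auto simp: is_walk_def)
  qed simp
qed

lemma is_walk_tl: "is_walk G (x # ys) \<Longrightarrow> ys \<noteq> [] \<Longrightarrow> is_walk G ys"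
  by (cases ys) (auto simp: is_walk_Cons_Cons)

lemma is_walk_suffix: "is_walk G (xs @ ys) \<Longrightarrow> ys \<noteq> [] \<Longrightarrow> is_walk G ys"
  by (induction xs) (auto dest: is_walk_tl)

lemma is_walk_subgraph: "subgraph C G \<Longrightarrow> is_walk C p \<Longrightarrow> is_walk G p"
  by (auto simp: subgraph_def is_walk_def)

lemma is_walk_join:
  "is_walk G xs \<Longrightarrow> is_walk G ys \<Longrightarrow> last xs = hd ys \<Longrightarrow> is_walk G (xs @ tl ys)"
proof (induction xs)
  case Nil
  then show ?case by (simp add: is_walk_def)
next
  case (Cons x xs)
  show ?case
  proof (cases xs)
    case Nil
    then show ?thesis using Cons is_walk_not_Nil[OF Cons(3)] by (cases ys) auto
  next
    case (Cons y zs)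
    then have "is_walk G (xs @ tl ys)" using Cons.IH Cons.prems by (auto dest: is_walk_tl)
    then show ?thesis using Cons.prems \<open>xs = y # zs\<close> by (auto simp: is_walk_Cons_Cons)
  qed
qed

lemma is_walk_rev: "is_walk G p \<Longrightarrow> is_walk G (rev p)"
proof (induction p)
  case Nil
  then show ?case by (simp add: is_walk_def)
next
  case (Cons x p)
  show ?case
  proof (cases p)
    case Nil
    then show ?thesis using Cons by simp
  next
    case (Cons y zs)
    then have p: "is_walk G p" "x \<in> fst G" "{x, y} \<in> snd G"
      using Cons.prems by (auto simp: is_walk_Cons_Cons)
    have "is_walk G [y, x]" using p Cons by (auto simp: is_walk_Cons_Cons insert_commute is_walk_def)
    from is_walk_join[OF Cons.IH[OF p(1)] this] show ?thesis using Cons by simp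
  qed
qed

lemma walk_contains_path:
  "is_walk G w \<Longrightarrow>
    \<exists>p. is_path G p \<and> hd p = hd w \<and> last p = last w \<and> set p \<subseteq> set w \<and> length p \<le> length w"
proof (induction w)
  case Nil
  then show ?case by (simp add: is_walk_def)
next
  case (Cons x w)
  show ?case
  proof (cases "w = []")
    case True
    then show ?thesis using Cons.prems by (intro exI[of _ "[x]"]) (simp add: is_path_def)
  next
    case False
    obtain p where p: "is_path G p" "hd p = hd w" "last p = last w" "set p \<subseteq> set w"
      "length p \<le> length w"
      using Cons.IH[OF is_walk_tl[OF Cons.prems False]] by blast
    show ?thesis
    proof (cases "x \<in> set p")
      case True
      \<comment> \<open>cut the cycle through x: keep only the part of p from x on\<close>
      then obtain a b where ab: "p = a @ x # b" by (meson split_list)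
      then have "is_path G (x # b)"
        using p(1) is_walk_suffix[of G a "x # b"] by (simp add: is_path_def)
      then show ?thesis using p ab False by (intro exI[of _ "x # b"]) auto
    next
      case False
      have "x \<in> fst G" "{x, hd w} \<in> snd G"
        using Cons.prems \<open>w \<noteq> []\<close> by (metis is_walk_Cons_Cons list.collapse)+
      then have "is_walk G (x # p)"
        using p(1,2) is_walk_not_Nil[of G p]
        by (metis is_path_def is_walk_Cons_Cons list.collapse)
      then have "is_path G (x # p)" using False p(1) by (simp add: is_path_def)
      then show ?thesis using p \<open>w \<noteq> []\<close> is_walk_not_Nil[of G p] p(1)
        by (intro exI[of _ "x # p"]) (auto simp: is_path_def)
    qed
  qed
qed

lemma radius_le_path:
  assumes "radius_le C l" "v1 \<in> fst C" "v2 \<in> fst C"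
  shows "\<exists>q. is_path C q \<and> hd q = v1 \<and> last q = v2 \<and> enat (length q) \<le> 2 * l + 1"
proof -
  obtain c where centre:
    "\<forall>v\<in>fst C. \<exists>p. is_walk C p \<and> hd p = c \<and> last p = v \<and> enat (length p - 1) \<le> l"
    using assms(1) unfolding radius_le_def by blast
  obtain w1 where w1: "is_walk C w1" "hd w1 = c" "last w1 = v1" "enat (length w1 - 1) \<le> l"
    using centre assms by blast
  obtain w2 where w2: "is_walk C w2" "hd w2 = c" "last w2 = v2" "enat (length w2 - 1) \<le> l"
    using centre assms by blast
  have ne: "w1 \<noteq> []" "w2 \<noteq> []" using w1 w2 is_walk_not_Nil by blast+
  define w where "w = rev w1 @ tl w2"
  have "is_walk C w"
    unfolding w_def using is_walk_join[OF is_walk_rev[OF w1(1)] w2(1)] w1(2) w2(2) ne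
    by (simp add: last_rev)
  moreover have "hd w = v1" using ne w1(3) by (simp add: w_def hd_rev)
  moreover have "last w = v2" using ne w1(2) w2(2,3) by (cases w2) (auto simp: w_def last_rev)
  ultimately obtain q where q: "is_path C q" "hd q = v1" "last q = v2" "length q \<le> length w"
    using walk_contains_path[of C w] by auto
  have "length q \<le> (length w1 - 1) + (length w2 - 1) + 1"
    using q(4) ne by (cases w2) (auto simp: w_def)
  then have "enat (length q) \<le> enat (length w1 - 1) + enat (length w2 - 1) + 1"
    by (simp add: one_enat_def)
  also have "\<dots> \<le> l + l + 1" using w1(4) w2(4) by (intro add_mono) auto
  finally show ?thesis using q by (intro exI[of _ q]) (simp add: mult_2)
qed

lemma path_through_radius_le:
  assumes "subgraph C G" "radius_le C l" "v1 \<in> fst C" "v2 \<in> fst C"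
    and "y1 \<in> fst G" "y2 \<in> fst G" "y1 \<notin> fst C" "y2 \<notin> fst C" "y1 \<noteq> y2"
    and "{y1, v1} \<in> snd G" "{y2, v2} \<in> snd G"
  shows "\<exists>p. is_path G p \<and> hd p = y1 \<and> last p = y2 \<and> 1 \<le> length p - 2 \<and>
    enat (length p - 2) \<le> 2 * l + 1 \<and> set (butlast (tl p)) \<subseteq> fst C"
proof -
  obtain q where q: "is_path C q" "hd q = v1" "last q = v2" "enat (length q) \<le> 2 * l + 1"
    using radius_le_path[OF assms(2-4)] by blast
  have q_ne: "q \<noteq> []" using q(1) is_walk_not_Nil[of C q] by (simp add: is_path_def)
  have q_C: "set q \<subseteq> fst C" using q(1) by (simp add: is_path_def is_walk_def)
  have "is_walk G [v2, y2]"
    using assms(1,4,6,11) by (auto simp: is_walk_Cons_Cons subgraph_def insert_commute)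
  then have "is_walk G (q @ [y2])"
    using is_walk_join[of G q "[v2, y2]"] is_walk_subgraph[OF assms(1)] q(1,3)
    by (simp add: is_path_def)
  moreover have "q @ [y2] = v1 # tl q @ [y2]" using q_ne q(2) by (cases q) auto
  ultimately have "is_walk G (y1 # q @ [y2])"
    using assms(5,10) by (metis is_walk_Cons_Cons)
  moreover have "distinct (y1 # q @ [y2])" using q(1) q_C assms(7-9) by (auto simp: is_path_def)
  ultimately show ?thesis
    using q(4) q_ne q_C by (intro exI[of _ "y1 # q @ [y2]"]) (auto simp: is_path_def Suc_le_eq)
qed

definition neighbours_in :: "'a graph \<Rightarrow> 'a set \<Rightarrow> 'a graph \<Rightarrow> 'a set" where
  "neighbours_in G Y C = {y\<in>Y. \<exists>v\<in>fst C. {y, v} \<in> snd G}"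

lemma adherent_iff: "adherent G r C Y \<longleftrightarrow> fst C \<inter> Y = {} \<and> r \<le> card (neighbours_in G Y C)"
  by (simp add: adherent_def neighbours_in_def)

definition distinct_representatives ::
    "('b \<Rightarrow> 'a set) \<Rightarrow> 'b set \<Rightarrow> 'a set set \<Rightarrow> ('a set \<Rightarrow> 'b) \<Rightarrow> bool" where
  "distinct_representatives S \<C> E g \<longleftrightarrow> inj_on g E \<and> (\<forall>q\<in>E. g q \<in> \<C> \<and> q \<subseteq> S (g q))"

lemma distinct_representatives_mono:
  "\<forall>C\<in>\<C>. S C \<subseteq> S' C \<Longrightarrow> distinct_representatives S \<C> E g \<Longrightarrow>
    distinct_representatives S' \<C> E g"
  by (auto simp: distinct_representatives_def)

lemma distinct_representatives_subset:
  "distinct_representatives S \<C> E g \<Longrightarrow> E' \<subseteq> E \<Longrightarrow> distinct_representatives S \<C> E' g"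
  by (auto simp: distinct_representatives_def inj_on_subset)

lemma distinct_representatives_insert:
  assumes "distinct_representatives S \<C> E g" "C \<in> \<C> - g ` E" "q \<subseteq> S C" "q \<notin> E"
  shows "distinct_representatives S \<C> (insert q E) (g(q := C))"
proof -
  have "inj_on (g(q := C)) E" "g(q := C) ` E = g ` E"
    using assms(1,4) by (auto simp: distinct_representatives_def inj_on_def)
  then show ?thesis using assms by (auto simp: distinct_representatives_def)
qed

lemma route_through_neighbour_subgraph:
  assumes "Y \<subseteq> fst G" "subgraph C G" "fst C \<inter> Y = {}" "radius_le C l"
    and "card q = 2" "q \<subseteq> neighbours_in G Y C"
  shows "\<exists>p u v. q = {u, v} \<and> is_path G p \<and> 2 \<le> length p \<and> hd p = u \<and> last p = v \<and>
    length p - 2 \<in> {s. 1 \<le> s \<and> enat s \<le> 2 * l + 1} \<and> set (butlast (tl p)) \<subseteq> fst C"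
proof -
  obtain u v where uv: "q = {u, v}" "u \<noteq> v" using assms(5) by (meson card_2_iff)
  then obtain v1 v2 where "v1 \<in> fst C" "{u, v1} \<in> snd G" "v2 \<in> fst C" "{v, v2} \<in> snd G"
    "u \<in> Y" "v \<in> Y"
    using assms(6) by (auto simp: neighbours_in_def)
  then obtain p where "is_path G p" "hd p = u" "last p = v" "1 \<le> length p - 2"
    "enat (length p - 2) \<le> 2 * l + 1" "set (butlast (tl p)) \<subseteq> fst C"
    using path_through_radius_le[OF assms(2,4)] uv(2) assms(1,3) by blast
  then show ?thesis using uv(1) by (intro exI[of _ p] exI[of _ u] exI[of _ v]) simp
qed

lemma has_subdivision_in_through_members:
  assumes "graph G" "Y \<subseteq> fst G"
    and members: "\<forall>C\<in>\<C>. subgraph C G \<and> fst C \<inter> Y = {} \<and> radius_le C l"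
    and disjoint: "\<forall>C\<in>\<C>. \<forall>D\<in>\<C>. C \<noteq> D \<longrightarrow> fst C \<inter> fst D = {}"
    and "U \<subseteq> Y" and E: "\<forall>q\<in>E. card q = 2 \<and> q \<subseteq> U"
    and reps: "distinct_representatives (neighbours_in G Y) \<C> E g"
  shows "graph (U, E) \<and> has_subdivision_in G (U, E) {s. 1 \<le> s \<and> enat s \<le> 2 * l + 1} Y"
proof
  have "finite U"
    using finite_subset[OF subset_trans[OF \<open>U \<subseteq> Y\<close> assms(2)]] assms(1) by (simp add: graph_def)
  moreover have "\<exists>u v. e = {u, v} \<and> u \<noteq> v \<and> u \<in> U \<and> v \<in> U" if "e \<in> E" for e
    using E that by (metis card_2_iff insert_subset)
  ultimately show "graph (U, E)" unfolding graph_def by simp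
  let ?S = "{s. 1 \<le> s \<and> enat s \<le> 2 * l + 1}"
  have "\<forall>q\<in>E. \<exists>p. \<exists>u v. q = {u, v} \<and> is_path G p \<and> 2 \<le> length p \<and> hd p = u \<and> last p = v \<and>
      length p - 2 \<in> ?S \<and> set (butlast (tl p)) \<subseteq> fst (g q)"
  proof
    fix q assume "q \<in> E"
    then have "subgraph (g q) G" "fst (g q) \<inter> Y = {}" "radius_le (g q) l"
      "card q = 2" "q \<subseteq> neighbours_in G Y (g q)"
      using members reps E by (auto simp: distinct_representatives_def)
    then show "\<exists>p. \<exists>u v. q = {u, v} \<and> is_path G p \<and> 2 \<le> length p \<and> hd p = u \<and> last p = v \<and>
      length p - 2 \<in> ?S \<and> set (butlast (tl p)) \<subseteq> fst (g q)"
      using route_through_neighbour_subgraph[OF assms(2)] by blast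
  qed
  from bchoice[OF this] obtain P where P: "\<forall>q\<in>E. \<exists>u v. q = {u, v} \<and> is_path G (P q) \<and>
      2 \<le> length (P q) \<and> hd (P q) = u \<and> last (P q) = v \<and> length (P q) - 2 \<in> ?S \<and>
      set (butlast (tl (P q))) \<subseteq> fst (g q)"
    by blast
  have inner: "set (butlast (tl (P q))) \<subseteq> fst (g q)" "fst (g q) \<inter> Y = {}" if "q \<in> E" for q
    using P reps members that by (auto simp: distinct_representatives_def)
  show "has_subdivision_in G (U, E) ?S Y" unfolding has_subdivision_in_def
  proof (intro exI[of _ id] exI[of _ P] conjI ballI impI)
    show "inj_on id (fst (U, E))" "id ` fst (U, E) \<subseteq> Y" using \<open>U \<subseteq> Y\<close> by simp_all
  next
    fix e assume "e \<in> snd (U, E)"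
    then have "e \<in> E" by simp
    then have "set (butlast (tl (P e))) \<inter> id ` fst (U, E) = {}"
      using inner[OF \<open>e \<in> E\<close>] \<open>U \<subseteq> Y\<close> by auto
    then show "\<exists>u v. e = {u, v} \<and> is_path G (P e) \<and> 2 \<le> length (P e) \<and> hd (P e) = id u \<and>
      last (P e) = id v \<and> length (P e) - 2 \<in> ?S \<and> set (butlast (tl (P e))) \<inter> id ` fst (U, E) = {}"
      using P \<open>e \<in> E\<close> by auto
  next
    fix e e' assume "e \<in> snd (U, E)" "e' \<in> snd (U, E)" "e \<noteq> e'"
    then have "e \<in> E" "e' \<in> E" "g e \<noteq> g e'"
      using reps by (auto simp: distinct_representatives_def dest: inj_onD)
    then have "fst (g e) \<inter> fst (g e') = {}"
      using reps disjoint by (auto simp: distinct_representatives_def)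
    then show "set (butlast (tl (P e))) \<inter> set (butlast (tl (P e'))) = {}"
      using inner(1)[OF \<open>e \<in> E\<close>] inner(1)[OF \<open>e' \<in> E\<close>] by auto
  qed
qed

lemma card_le_mult_card_of_fibres:
  assumes "finite B" "f ` A \<subseteq> B" "\<And>b. b \<in> B \<Longrightarrow> card {a\<in>A. f a = b} \<le> m"
  shows "card A \<le> m * card B"
proof -
  have "card A = card (\<Union>b\<in>B. {a\<in>A. f a = b})" using assms(2) by (intro arg_cong[of _ _ card]) auto
  also have "\<dots> \<le> (\<Sum>b\<in>B. card {a\<in>A. f a = b})" by (rule card_UN_le[OF assms(1)])
  also have "\<dots> \<le> (\<Sum>b\<in>B. m)" using assms(3) by (rule sum_mono)
  finally show ?thesis by (simp add: mult.commute)
qed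

definition clique :: "'a set set \<Rightarrow> 'a set \<Rightarrow> bool" where
  "clique E T \<longleftrightarrow> (\<forall>a\<in>T. \<forall>b\<in>T. a \<noteq> b \<longrightarrow> {a, b} \<in> E)"

definition cliques :: "nat \<Rightarrow> 'a set \<Rightarrow> 'a set set \<Rightarrow> 'a set set" where
  "cliques r U E = {T. T \<subseteq> U \<and> card T = r \<and> clique E T}"

lemma finite_cliques: "finite U \<Longrightarrow> finite (cliques r U E)"
  by (rule finite_subset[of _ "Pow U"]) (auto simp: cliques_def)

lemma exists_vertex_of_low_degree:
  fixes B :: real
  assumes "finite A" "A \<noteq> {}" "\<forall>e\<in>E. card e = 2"
    and "2 * real (card {e\<in>E. e \<subseteq> A}) \<le> B * real (card A)"
  shows "\<exists>v\<in>A. real (card {u\<in>A. {u, v} \<in> E}) \<le> B"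
proof -
  define EA where "EA = {e\<in>E. e \<subseteq> A}"
  define deg where "deg v = card {e\<in>EA. v \<in> e}" for v
  have "finite EA" unfolding EA_def by (rule finite_subset[of _ "Pow A"]) (auto simp: assms(1))
  have "{u\<in>A. u \<in> e} = e" "card e = 2" if "e \<in> EA" for e
    using that assms(3) by (auto simp: EA_def)
  then have "(\<Sum>v\<in>A. deg v) = 2 * card EA" unfolding deg_def
    using sum_multicount[OF assms(1) \<open>finite EA\<close>, of "\<lambda>v e. v \<in> e" 2] by simp
  then have "(\<Sum>v\<in>A. real (deg v)) \<le> B * real (card A)"
    using assms(4) unfolding EA_def by (metis of_nat_mult of_nat_numeral of_nat_sum)
  moreover obtain v where "v \<in> A" and v_min: "\<forall>u\<in>A. deg v \<le> deg u"
    using arg_min_if_finite[OF assms(1,2), of deg] by (metis not_less)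
  ultimately have "real (card A) * real (deg v) \<le> real (card A) * B"
    using sum_mono[of A "\<lambda>_. real (deg v)" "\<lambda>u. real (deg u)"] by (simp add: mult.commute)
  then have "real (deg v) \<le> B" using assms(1,2) by (simp add: card_gt_0_iff)
  moreover have "card {u\<in>A. {u, v} \<in> E} \<le> deg v" unfolding deg_def
  proof (rule card_inj_on_le[of "\<lambda>u. {u, v}"])
    show "inj_on (\<lambda>u. {u, v}) {u\<in>A. {u, v} \<in> E}" by (auto simp: inj_on_def doubleton_eq_iff)
    show "(\<lambda>u. {u, v}) ` {u\<in>A. {u, v} \<in> E} \<subseteq> {e\<in>EA. v \<in> e}"
      using \<open>v \<in> A\<close> by (auto simp: EA_def)
    show "finite {e\<in>EA. v \<in> e}" using \<open>finite EA\<close> by simp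
  qed
  ultimately show ?thesis using \<open>v \<in> A\<close> by (intro bexI[of _ v]) linarith+
qed

lemma card_cliques_containing_le:
  assumes "finite A"
  shows "card {T\<in>cliques r A E. v \<in> T} \<le> card {u\<in>A. {u, v} \<in> E} choose (r - 1)"
proof -
  let ?N = "{u\<in>A. {u, v} \<in> E}"
  have "card {T\<in>cliques r A E. v \<in> T} \<le> card {X. X \<subseteq> ?N \<and> card X = r - 1}"
  proof (rule card_inj_on_le[of "\<lambda>T. T - {v}"])
    show "inj_on (\<lambda>T. T - {v}) {T\<in>cliques r A E. v \<in> T}"
      by (rule inj_onI) (metis (no_types, lifting) insert_Diff mem_Collect_eq)
    show "(\<lambda>T. T - {v}) ` {T\<in>cliques r A E. v \<in> T} \<subseteq> {X. X \<subseteq> ?N \<and> card X = r - 1}"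
      using assms by (auto simp: cliques_def clique_def finite_subset)
    show "finite {X. X \<subseteq> ?N \<and> card X = r - 1}" using assms by simp
  qed
  also have "\<dots> = card ?N choose (r - 1)" using assms by (simp add: n_subsets)
  finally show ?thesis .
qed

lemma card_cliques_le:
  fixes B :: real
  assumes "finite U" "B \<ge> 0" "r \<ge> 1" "\<forall>e\<in>E. card e = 2"
    and sparse: "\<forall>W\<subseteq>U. 2 * real (card {e\<in>E. e \<subseteq> W}) \<le> B * real (card W)"
  shows "real (card (cliques r U E)) \<le> real (card U) * B ^ (r - 1)"
  using assms(1)
proof (induction U rule: finite_remove_induct)
  case empty
  have "cliques r {} E = {}" using assms(3) by (auto simp: cliques_def)
  then show ?case by simp
next
  case (remove A)
  have "2 * real (card {e\<in>E. e \<subseteq> A}) \<le> B * real (card A)" using sparse remove(3) by simp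
  then obtain v where "v \<in> A" and deg_v: "real (card {u\<in>A. {u, v} \<in> E}) \<le> B"
    using exists_vertex_of_low_degree[OF remove(1,2) assms(4)] by blast
  let ?through_v = "{T\<in>cliques r A E. v \<in> T}"
  have "real (card ?through_v) \<le> B ^ (r - 1)"
  proof (cases "r - 1 \<le> card {u\<in>A. {u, v} \<in> E}")
    case True
    then have "card ?through_v \<le> card {u\<in>A. {u, v} \<in> E} ^ (r - 1)"
      by (rule order_trans[OF card_cliques_containing_le[OF remove(1)] binomial_le_pow])
    then have "real (card ?through_v) \<le> real (card {u\<in>A. {u, v} \<in> E}) ^ (r - 1)"
      unfolding of_nat_power[symmetric] of_nat_le_iff .
    also have "\<dots> \<le> B ^ (r - 1)" using deg_v by (intro power_mono) auto
    finally show ?thesis .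
  next
    case False
    then have "card ?through_v = 0"
      using card_cliques_containing_le[OF remove(1), of r E v] by (simp add: binomial_eq_0)
    then show ?thesis using assms(2) by simp
  qed
  moreover have "card (cliques r A E) \<le> card ?through_v + card (cliques r (A - {v}) E)"
  proof -
    have "cliques r A E \<subseteq> ?through_v \<union> cliques r (A - {v}) E" by (auto simp: cliques_def)
    then have "card (cliques r A E) \<le> card (?through_v \<union> cliques r (A - {v}) E)"
      using finite_cliques[OF remove(1)] finite_cliques[of "A - {v}"] remove(1)
      by (intro card_mono) auto
    also have "\<dots> \<le> card ?through_v + card (cliques r (A - {v}) E)" by (rule card_Un_le)
    finally show ?thesis .
  qed
  ultimately have "real (card (cliques r A E)) \<le> (1 + real (card (A - {v}))) * B ^ (r - 1)"
    using remove(4)[OF \<open>v \<in> A\<close>] by (simp add: algebra_simps)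
  also have "1 + real (card (A - {v})) = real (card A)"
    using card.remove[OF remove(1) \<open>v \<in> A\<close>] by simp
  finally show ?case .
qed

lemma exists_maximal_distinct_representatives:
  assumes "finite Y" "\<forall>C\<in>\<C>. S C \<subseteq> Y"
  obtains H g where "\<forall>q\<in>H. card q = 2 \<and> q \<subseteq> Y" "distinct_representatives S \<C> H g"
    "\<And>C. C \<in> \<C> - g ` H \<Longrightarrow> clique H (S C)"
proof -
  define pairs where "pairs = {q. q \<subseteq> Y \<and> card q = 2}"
  define represented where
    "represented = {H. H \<subseteq> pairs \<and> (\<exists>g. distinct_representatives S \<C> H g)}"
  have "finite pairs" unfolding pairs_def using assms(1) by (simp add: finite_subset[of _ "Pow Y"])
  then have "finite represented" unfolding represented_def by (simp add: finite_subset[of _ "Pow pairs"])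
  moreover have "{} \<in> represented" by (simp add: represented_def distinct_representatives_def)
  ultimately obtain H where "H \<in> represented" and max: "\<And>H'. H' \<in> represented \<Longrightarrow> card H' \<le> card H"
    using Max_in[of "card ` represented"] Max_ge[of "card ` represented"] by fastforce
  then obtain g where H: "H \<subseteq> pairs" and g: "distinct_representatives S \<C> H g"
    unfolding represented_def by blast
  have "finite H" using H \<open>finite pairs\<close> by (rule finite_subset)
  have "clique H (S C)" if C: "C \<in> \<C> - g ` H" for C
    unfolding clique_def
  proof (intro ballI impI)
    fix a b assume ab: "a \<in> S C" "b \<in> S C" "a \<noteq> b"
    show "{a, b} \<in> H"
    proof (rule ccontr)
      assume "{a, b} \<notin> H"
      then have "distinct_representatives S \<C> (insert {a, b} H) (g({a, b} := C))"
        using distinct_representatives_insert[OF g C] ab by simp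
      moreover have "{a, b} \<in> pairs" using ab C assms(2) by (auto simp: pairs_def)
      ultimately have "insert {a, b} H \<in> represented" using H by (auto simp: represented_def)
      then show False using max \<open>finite H\<close> \<open>{a, b} \<notin> H\<close> by fastforce
    qed
  qed
  then show thesis using that[of H g] H g by (auto simp: pairs_def)
qed

lemma powr_one_plus_le:
  fixes x y \<epsilon> :: real
  assumes "0 \<le> x" "x \<le> y" "0 \<le> \<epsilon>"
  shows "x powr (1 + \<epsilon>) \<le> x * y powr \<epsilon>"
proof (cases "x = 0")
  case False
  then have "x powr (1 + \<epsilon>) = x * x powr \<epsilon>" using assms(1) by (simp add: powr_add)
  also have "\<dots> \<le> x * y powr \<epsilon>" using assms by (intro mult_left_mono powr_mono2) auto
  finally show ?thesis .
qed simp

lemma mult_power_powr_eq: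
  fixes n c \<epsilon> :: real
  assumes "0 \<le> n" "r > 0"
  shows "n * (c * n powr \<epsilon>) ^ (r - 1) = c ^ (r - 1) * n powr (1 + \<epsilon> * (real r - 1))"
proof (cases "n = 0")
  case False
  then have "n * (n powr \<epsilon>) ^ (r - 1) = n powr (1 + \<epsilon> * (real r - 1))"
    using assms by (simp add: powr_power powr_add of_nat_diff mult.commute)
  then show ?thesis by (simp add: power_mult_distrib)
qed simp

lemma card_le_card_plus_mult_card_cliques:
  assumes "finite \<C>" "finite Y" "finite H"
    and S: "\<forall>C\<in>\<C>. S C \<subseteq> Y \<and> card (S C) = r"
    and fibres: "\<And>T. card {C\<in>\<C>. S C = T} \<le> m"
    and clique: "\<And>C. C \<in> \<C> - g ` H \<Longrightarrow> clique H (S C)"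
  shows "card \<C> \<le> card H + m * card (cliques r Y H)"
proof -
  have unused: "card (\<C> - g ` H) \<le> m * card (cliques r Y H)"
  proof (rule card_le_mult_card_of_fibres[OF finite_cliques[OF assms(2)]])
    show "S ` (\<C> - g ` H) \<subseteq> cliques r Y H" using S clique by (auto simp: cliques_def)
    have "card {C\<in>\<C> - g ` H. S C = T} \<le> card {C\<in>\<C>. S C = T}" for T
      by (rule card_mono) (use assms(1) in auto)
    then show "card {C\<in>\<C> - g ` H. S C = T} \<le> m" for T using fibres order_trans by blast
  qed
  have "card \<C> \<le> card (g ` H \<union> (\<C> - g ` H))" by (rule card_mono) (use assms(1,3) in auto)
  also have "\<dots> \<le> card (g ` H) + card (\<C> - g ` H)" by (rule card_Un_le)
  also have "\<dots> \<le> card H + m * card (cliques r Y H)"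
    using card_image_le[OF assms(3), of g] unused by linarith
  finally show ?thesis .
qed

lemma card_cliques_le_powr:
  fixes k \<epsilon> :: real
  assumes "finite Y" "r > 0" "k \<ge> 0" "\<epsilon> \<ge> 0" "\<forall>q\<in>H. card q = 2 \<and> q \<subseteq> Y"
    and sparse: "\<And>W. W \<subseteq> Y \<Longrightarrow> real (card {e\<in>H. e \<subseteq> W}) \<le> k * real (card W) powr (1 + \<epsilon>)"
  shows "real (card (cliques r Y H)) \<le> (2 * k) ^ (r - 1) * real (card Y) powr (1 + \<epsilon> * (real r - 1))"
proof -
  let ?n = "real (card Y)"
  have "real (card (cliques r Y H)) \<le> ?n * (2 * k * ?n powr \<epsilon>) ^ (r - 1)"
  proof (rule card_cliques_le[OF assms(1)])
    show "0 \<le> 2 * k * ?n powr \<epsilon>" "1 \<le> r" "\<forall>e\<in>H. card e = 2" using assms(2,3,5) by auto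
    show "\<forall>W\<subseteq>Y. 2 * real (card {e\<in>H. e \<subseteq> W}) \<le> 2 * k * ?n powr \<epsilon> * real (card W)"
    proof (intro allI impI)
      fix W assume "W \<subseteq> Y"
      have "real (card {e\<in>H. e \<subseteq> W}) \<le> k * real (card W) powr (1 + \<epsilon>)"
        by (rule sparse[OF \<open>W \<subseteq> Y\<close>])
      also have "\<dots> \<le> k * (real (card W) * ?n powr \<epsilon>)"
        using powr_one_plus_le card_mono[OF assms(1) \<open>W \<subseteq> Y\<close>] assms(3,4)
        by (intro mult_left_mono) auto
      finally show "2 * real (card {e\<in>H. e \<subseteq> W}) \<le> 2 * k * ?n powr \<epsilon> * real (card W)"
        by (simp add: algebra_simps)
    qed
  qed
  also have "\<dots> = (2 * k) ^ (r - 1) * real (card Y) powr (1 + \<epsilon> * (real r - 1))"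
    using mult_power_powr_eq assms(2) by simp
  finally show ?thesis .
qed

lemma card_distinct_representatives_le:
  fixes k \<epsilon> :: real
  assumes "r > 0" "k \<ge> 0" "\<epsilon> \<ge> 0" "\<forall>C\<in>\<C>. S C \<subseteq> Y \<and> card (S C) = r"
    and H: "\<forall>q\<in>H. card q = 2 \<and> q \<subseteq> Y" and g: "distinct_representatives S \<C> H g"
    and sparse: "real (card H) \<le> k * real (card Y) powr (1 + \<epsilon>)"
  shows "real (card H) \<le> k * real (card Y) powr (1 + \<epsilon> * (real r - 1))"
proof (cases "r = 1")
  case True
  have "H = {}"
  proof (rule ccontr)
    assume "H \<noteq> {}"
    then obtain q where "q \<in> H" by blast
    then have "q \<subseteq> S (g q)" "card (S (g q)) = 1" "card q = 2"
      using g H assms(4) True by (auto simp: distinct_representatives_def)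
    then show False using card_mono[of "S (g q)" q] card_ge_0_finite[of "S (g q)"] by simp
  qed
  then show ?thesis using assms(2) by simp
next
  case False
  have "k * real (card Y) powr (1 + \<epsilon>) \<le> k * real (card Y) powr (1 + \<epsilon> * (real r - 1))"
  proof (cases "card Y = 0")
    case False
    have "1 \<le> real r - 1" using \<open>r \<noteq> 1\<close> assms(1) by linarith
    then have "1 + \<epsilon> \<le> 1 + \<epsilon> * (real r - 1)"
      using mult_left_mono[of 1 "real r - 1" \<epsilon>] assms(3) by simp
    then show ?thesis using False assms(2) by (intro mult_left_mono powr_mono) auto
  qed simp
  then show ?thesis using sparse by linarith
qed

lemma card_le_if_distinct_representatives_sparse:
  fixes S :: "'b \<Rightarrow> 'a set" and k \<epsilon> :: real
  assumes "finite Y" "r > 0" "k \<ge> 0" "\<epsilon> \<ge> 0"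
    and S: "\<forall>C\<in>\<C>. S C \<subseteq> Y \<and> card (S C) = r"
    and fibres: "\<And>T. card {C\<in>\<C>. S C = T} \<le> m"
    and sparse: "\<And>U E g. U \<subseteq> Y \<Longrightarrow> \<forall>q\<in>E. card q = 2 \<and> q \<subseteq> U \<Longrightarrow>
      distinct_representatives S \<C> E g \<Longrightarrow> real (card E) \<le> k * real (card U) powr (1 + \<epsilon>)"
  shows "real (card \<C>) \<le> (k + real m * (2 * k) ^ (r - 1)) * real (card Y) powr (1 + \<epsilon> * (real r - 1))"
proof (cases "finite \<C>")
  case False
  then show ?thesis using assms(3) by simp
next
  case True
  let ?X = "real (card Y) powr (1 + \<epsilon> * (real r - 1))"
  have "\<forall>C\<in>\<C>. S C \<subseteq> Y" using S by blast
  obtain H g where H: "\<forall>q\<in>H. card q = 2 \<and> q \<subseteq> Y" and g: "distinct_representatives S \<C> H g"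
    and clique: "\<And>C. C \<in> \<C> - g ` H \<Longrightarrow> clique H (S C)"
    using exists_maximal_distinct_representatives[OF assms(1) \<open>\<forall>C\<in>\<C>. S C \<subseteq> Y\<close>] by blast
  have "finite H" using H assms(1) by (intro finite_subset[of H "Pow Y"]) auto
  have "card \<C> \<le> card H + m * card (cliques r Y H)"
    by (rule card_le_card_plus_mult_card_cliques[OF True assms(1) \<open>finite H\<close> S fibres clique])
  then have count: "real (card \<C>) \<le> real (card H) + real m * real (card (cliques r Y H))"
    by (metis of_nat_add of_nat_le_iff of_nat_mult)
  have "real (card (cliques r Y H)) \<le> (2 * k) ^ (r - 1) * ?X"
    using card_cliques_le_powr[OF assms(1-4) H] sparse[OF _ _ distinct_representatives_subset[OF g]] H
    by auto
  then have "real m * real (card (cliques r Y H)) \<le> real m * ((2 * k) ^ (r - 1) * ?X)"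
    by (rule mult_left_mono) simp
  moreover have "real (card H) \<le> k * ?X"
    using card_distinct_representatives_le[OF assms(2-4) S H g sparse[OF order_refl H g]] .
  ultimately show ?thesis using count by (simp add: algebra_simps)
qed

lemma card_le_if_no_subdivision_no_biclique:
  fixes G :: "'a graph" and k \<epsilon> :: real
  assumes "r > 0" "t > 0" "k \<ge> 0" "\<epsilon> \<ge> 0" "graph G" "Y \<subseteq> fst G"
    and members: "\<forall>C\<in>\<C>. subgraph C G \<and> adherent G r C Y \<and> radius_le C l"
    and disjoint: "\<forall>C\<in>\<C>. \<forall>D\<in>\<C>. C \<noteq> D \<longrightarrow> fst C \<inter> fst D = {}"
    and no_subdivision: "\<nexists>L::'a graph. graph L \<and>
      real (card (snd L)) > k * real (card (fst L)) powr (1 + \<epsilon>) \<and>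
      has_subdivision_in G L {s. 1 \<le> s \<and> enat s \<le> 2 * l + 1} Y"
    and no_biclique: "\<nexists>Ys Cs. Ys \<subseteq> Y \<and> card Ys = r \<and> Cs \<subseteq> \<C> \<and> card Cs = t \<and>
      (\<forall>y\<in>Ys. \<forall>C\<in>Cs. \<exists>v\<in>fst C. {y, v} \<in> snd G)"
  shows "real (card \<C>) \<le>
    (k + real (t - 1) * (2 * k) ^ (r - 1)) * real (card Y) powr (1 + \<epsilon> * (real r - 1))"
proof -
  have "finite Y" using assms(5,6) finite_subset unfolding graph_def by auto
  have "r \<le> card (neighbours_in G Y C)" if "C \<in> \<C>" for C
    using members that by (simp add: adherent_iff)
  then have "\<forall>C\<in>\<C>. \<exists>T. T \<subseteq> neighbours_in G Y C \<and> card T = r"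
    by (meson obtain_subset_with_card_n)
  from bchoice[OF this] obtain S where S: "\<forall>C\<in>\<C>. S C \<subseteq> neighbours_in G Y C \<and> card (S C) = r"
    by blast
  then have SY: "\<forall>C\<in>\<C>. S C \<subseteq> Y \<and> card (S C) = r" by (auto simp: neighbours_in_def)
  have fibres: "card {C\<in>\<C>. S C = T} \<le> t - 1" for T
  proof (rule ccontr)
    assume "\<not> card {C\<in>\<C>. S C = T} \<le> t - 1"
    then have "t \<le> card {C\<in>\<C>. S C = T}" by linarith
    then obtain Cs where Cs: "Cs \<subseteq> {C\<in>\<C>. S C = T}" "card Cs = t"
      by (rule obtain_subset_with_card_n)
    then have "Cs \<noteq> {}" using assms(2) by auto
    then obtain C where "C \<in> Cs" by blast
    then have "T \<subseteq> Y" "card T = r" using Cs SY by auto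
    moreover have "\<forall>y\<in>T. \<forall>C\<in>Cs. \<exists>v\<in>fst C. {y, v} \<in> snd G"
      using Cs S by (fastforce simp: neighbours_in_def)
    ultimately show False using no_biclique Cs by blast
  qed
  show ?thesis
  proof (rule card_le_if_distinct_representatives_sparse[OF \<open>finite Y\<close> assms(1,3,4) SY fibres])
    fix U :: "'a set" and E g
    assume U: "U \<subseteq> Y" "\<forall>q\<in>E. card q = 2 \<and> q \<subseteq> U" "distinct_representatives S \<C> E g"
    have "\<forall>C\<in>\<C>. subgraph C G \<and> fst C \<inter> Y = {} \<and> radius_le C l"
      using members by (simp add: adherent_iff)
    moreover have "distinct_representatives (neighbours_in G Y) \<C> E g"
      using distinct_representatives_mono[of \<C> S "neighbours_in G Y"] S U(3) by blast
    ultimately have "graph (U, E) \<and> has_subdivision_in G (U, E) {s. 1 \<le> s \<and> enat s \<le> 2 * l + 1} Y"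
      using has_subdivision_in_through_members[OF assms(5,6) _ disjoint U(1,2)] by blast
    then show "real (card E) \<le> k * real (card U) powr (1 + \<epsilon>)"
      using no_subdivision by (metis fst_conv snd_conv not_le)
  qed
qed

theorem mainTheorem8:
  fixes r t :: nat and k' :: real
  assumes "r > 0" and "t > 0" and "k' > 0"
  shows "\<exists>\<alpha>::real. \<alpha> > 0 \<and>
    (\<forall>(l::enat) (b::nat) (\<epsilon>'::real) (G::nat graph) (Y::nat set)
        (\<C>::nat graph set).
      b > 0 \<longrightarrow> \<epsilon>' \<ge> 0 \<longrightarrow> graph G \<longrightarrow> Y \<subseteq> fst G \<longrightarrow>
      (\<forall>C\<in>\<C>. subgraph C G \<and> fst C \<inter> Y = {} \<and> connected_graph C \<and>
               card (fst C) \<le> b \<and> adherent G r C Y \<and> radius_le C l) \<longrightarrow>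
      (\<forall>C\<in>\<C>. \<forall>D\<in>\<C>. C \<noteq> D \<longrightarrow> fst C \<inter> fst D = {}) \<longrightarrow>
      (\<exists>L::nat graph. graph L \<and>
          real (card (snd L)) > k' * real (card (fst L)) powr (1 + \<epsilon>') \<and>
          has_subdivision_in G L {s. 1 \<le> s \<and> enat s \<le> 2 * l + 1} Y)
      \<or> (\<exists>Ys Cs. Ys \<subseteq> Y \<and> card Ys = r \<and> Cs \<subseteq> \<C> \<and> card Cs = t \<and>
            (\<forall>y\<in>Ys. \<forall>C\<in>Cs. \<exists>v\<in>fst C. {y, v} \<in> snd G))
      \<or> real (card \<C>) \<le> \<alpha> * real (card Y) powr (1 + \<epsilon>' * (real r - 1)))"
proof (intro exI[of _ "k' + real (t - 1) * (2 * k') ^ (r - 1)"] conjI allI impI)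
  show "0 < k' + real (t - 1) * (2 * k') ^ (r - 1)" using assms(3) by (simp add: add_pos_nonneg)
  fix l :: enat and b :: nat and \<epsilon>' :: real and G :: "nat graph" and Y :: "nat set"
    and \<C> :: "nat graph set"
  assume "\<epsilon>' \<ge> 0" "graph G" "Y \<subseteq> fst G"
    and members: "\<forall>C\<in>\<C>. subgraph C G \<and> fst C \<inter> Y = {} \<and> connected_graph C \<and>
      card (fst C) \<le> b \<and> adherent G r C Y \<and> radius_le C l"
    and disjoint: "\<forall>C\<in>\<C>. \<forall>D\<in>\<C>. C \<noteq> D \<longrightarrow> fst C \<inter> fst D = {}"
  have "\<forall>C\<in>\<C>. subgraph C G \<and> adherent G r C Y \<and> radius_le C l" using members by blast
  from card_le_if_no_subdivision_no_biclique[OF assms(1,2) less_imp_le[OF assms(3)]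
      \<open>\<epsilon>' \<ge> 0\<close> \<open>graph G\<close> \<open>Y \<subseteq> fst G\<close> this disjoint]
  show "(\<exists>L::nat graph. graph L \<and>
          real (card (snd L)) > k' * real (card (fst L)) powr (1 + \<epsilon>') \<and>
          has_subdivision_in G L {s. 1 \<le> s \<and> enat s \<le> 2 * l + 1} Y)
      \<or> (\<exists>Ys Cs. Ys \<subseteq> Y \<and> card Ys = r \<and> Cs \<subseteq> \<C> \<and> card Cs = t \<and>
            (\<forall>y\<in>Ys. \<forall>C\<in>Cs. \<exists>v\<in>fst C. {y, v} \<in> snd G))
      \<or> real (card \<C>) \<le> (k' + real (t - 1) * (2 * k') ^ (r - 1)) *
          real (card Y) powr (1 + \<epsilon>' * (real r - 1))"
    by blast
qed

end
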